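(* Let $G$ be a group and $\mu$ a left-invariant probability measure on some algebra of subsets of $G$, with inner measure $\mu_*$. If the set $\{x\in G:x^3=1\}$ is $7$-large in $G$, then $G$ has exponent $3$. If $G$ is not of exponent $3$, then $\mu_*(\{x\in G:x^3=1\})\le\frac67$. If moreover $G$ is $2$-Engel (i.e. $[x,y,y]=1$ for all $x,y\in G$), then $\mu_*(\{x\in G:x^3=1\})\le\frac12$.
   Context: $[x,y]=x^{-1}y^{-1}xy$, $[x,y,z]=[[x,y],z]$. A subset $X\subseteq G$ is $k$-large in $G$ if the intersection of any $k$ left translates $g_1X\cap\dots\cap g_kX$ ($g_i\in G$) is non-empty. The inner measure is $\mu_*(X)=\sup\{\mu(Y):Y\subseteq X\text{ measurable}\}$. *)

theory Defs
  imports Complex_Main "HOL-Algebra.Coset"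
begin

definition comm :: "('a, 'b) monoid_scheme \<Rightarrow> 'a \<Rightarrow> 'a \<Rightarrow> 'a" where
  "comm G x y = inv\<^bsub>G\<^esub> x \<otimes>\<^bsub>G\<^esub> inv\<^bsub>G\<^esub> y \<otimes>\<^bsub>G\<^esub> x \<otimes>\<^bsub>G\<^esub> y"

definition two_Engel :: "('a, 'b) monoid_scheme \<Rightarrow> bool" where
  "two_Engel G \<longleftrightarrow> (\<forall>x\<in>carrier G. \<forall>y\<in>carrier G. comm G (comm G x y) y = \<one>\<^bsub>G\<^esub>)"

definition exponent3 :: "('a, 'b) monoid_scheme \<Rightarrow> bool" where
  "exponent3 G \<longleftrightarrow> (\<forall>x\<in>carrier G. x [^]\<^bsub>G\<^esub> (3::nat) = \<one>\<^bsub>G\<^esub>)"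

definition cube_roots :: "('a, 'b) monoid_scheme \<Rightarrow> 'a set" where
  "cube_roots G = {x\<in>carrier G. x [^]\<^bsub>G\<^esub> (3::nat) = \<one>\<^bsub>G\<^esub>}"

definition k_large :: "('a, 'b) monoid_scheme \<Rightarrow> nat \<Rightarrow> 'a set \<Rightarrow> bool" where
  "k_large G k X \<longleftrightarrow>
     (\<forall>g. (\<forall>i<k. g i \<in> carrier G) \<longrightarrow> (\<Inter>i<k. l_coset G (g i) X) \<noteq> {})"

definition set_algebra :: "'a set \<Rightarrow> 'a set set \<Rightarrow> bool" where
  "set_algebra \<Omega> M \<longleftrightarrow> M \<subseteq> Pow \<Omega> \<and> {} \<in> M \<and>
     (\<forall>A\<in>M. \<Omega> - A \<in> M) \<and> (\<forall>A\<in>M. \<forall>B\<in>M. A \<union> B \<in> M)"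

definition left_inv_prob_measure ::
    "('a, 'b) monoid_scheme \<Rightarrow> 'a set set \<Rightarrow> ('a set \<Rightarrow> real) \<Rightarrow> bool" where
  "left_inv_prob_measure G M \<mu> \<longleftrightarrow>
     set_algebra (carrier G) M \<and>
     (\<forall>A\<in>M. 0 \<le> \<mu> A) \<and>
     \<mu> (carrier G) = 1 \<and>
     (\<forall>A\<in>M. \<forall>B\<in>M. A \<inter> B = {} \<longrightarrow> \<mu> (A \<union> B) = \<mu> A + \<mu> B) \<and>
     (\<forall>g\<in>carrier G. \<forall>A\<in>M. l_coset G g A \<in> M \<and> \<mu> (l_coset G g A) = \<mu> A)"

definition inner_measure :: "'a set set \<Rightarrow> ('a set \<Rightarrow> real) \<Rightarrow> 'a set \<Rightarrow> real" where
  "inner_measure M \<mu> X = Sup {\<mu> Y | Y. Y \<in> M \<and> Y \<subseteq> X}"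

end

theory Submission
  imports Defs
begin

(* If w and its translates uw, u^-1 w, vw, uvw, vuw, uvuw are all cube roots, then, since
   (hw)^3 = h (w h w^-1) (w^-1 h w) for w^3 = 1, the seven conditions become relations between
   the w-conjugates of u and v which force u to commute with u^v.  Hence a 7-large set of cube
   roots makes G 2-Engel.  In a 2-Engel group the product of two cube roots is again a cube
   root, and when the cube roots form a 2-large set every a is such a product: a = w x^-1 with
   w, x cube roots and w = a x.
   For the measure bounds: if X is not k-large, some k translates g_i X have empty intersection,
   so for measurable Y contained in X the complements of the g_i Y cover G, and finite
   additivity with left invariance gives 1 <= k (1 - mu Y). *)

definition conjugate :: "('a, 'b) monoid_scheme \<Rightarrow> 'a \<Rightarrow> 'a \<Rightarrow> 'a" where
  "conjugate G g x = inv\<^bsub>G\<^esub> g \<otimes>\<^bsub>G\<^esub> x \<otimes>\<^bsub>G\<^esub> g"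

context group
begin

lemma inv_mult_cancel_left [simp]:
  "x \<in> carrier G \<Longrightarrow> y \<in> carrier G \<Longrightarrow> inv x \<otimes> (x \<otimes> y) = y"
  by (simp add: m_assoc[symmetric])

lemma mult_inv_cancel_left [simp]:
  "x \<in> carrier G \<Longrightarrow> y \<in> carrier G \<Longrightarrow> x \<otimes> (inv x \<otimes> y) = y"
  by (simp add: m_assoc[symmetric])

lemma mult_eq_one_solve_middle:
  assumes "a \<in> carrier G" "x \<in> carrier G" "b \<in> carrier G" "a \<otimes> x \<otimes> b = \<one>"
  shows "x = inv a \<otimes> inv b"
proof -
  have "inv a \<otimes> (a \<otimes> x \<otimes> b) \<otimes> inv b = inv a \<otimes> inv b"
    using assms by simp
  then show ?thesis
    using assms(1-3) by (simp add: m_assoc)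
qed

lemma mult_eq_one_imp_eq_inv:
  assumes "x \<in> carrier G" "y \<in> carrier G" "x \<otimes> y = \<one>"
  shows "y = inv x"
proof -
  have "inv x \<otimes> (x \<otimes> y) = inv x"
    using assms by simp
  then show ?thesis
    using assms(1,2) by simp
qed

lemma commute_if_mult_eq_one_and_inv_mult_eq_one:
  assumes "x \<in> carrier G" "y \<in> carrier G" "z \<in> carrier G"
    and "x \<otimes> y \<otimes> z = \<one>" "inv x \<otimes> inv y \<otimes> inv z = \<one>"
  shows "x \<otimes> y = y \<otimes> x"
proof -
  have "z = inv (x \<otimes> y)" "inv z = inv (inv x \<otimes> inv y)"
    using assms by (simp_all add: mult_eq_one_imp_eq_inv)
  then have "inv (x \<otimes> y) = inv (y \<otimes> x)"
    using assms(1-3) by (simp add: inv_mult_group)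
  then have "inv (inv (x \<otimes> y)) = inv (inv (y \<otimes> x))"
    by simp
  then show ?thesis
    using assms(1,2) by simp
qed

lemma conjugate_closed [simp]:
  "g \<in> carrier G \<Longrightarrow> x \<in> carrier G \<Longrightarrow> conjugate G g x \<in> carrier G"
  by (simp add: conjugate_def)

lemma conjugate_mult:
  "\<lbrakk>g \<in> carrier G; x \<in> carrier G; y \<in> carrier G\<rbrakk>
    \<Longrightarrow> conjugate G g (x \<otimes> y) = conjugate G g x \<otimes> conjugate G g y"
  by (simp add: conjugate_def m_assoc)

lemma conjugate_inv:
  "g \<in> carrier G \<Longrightarrow> x \<in> carrier G \<Longrightarrow> conjugate G g (inv x) = inv (conjugate G g x)"
  by (simp add: conjugate_def inv_mult_group m_assoc)

lemma conjugate_one [simp]: "g \<in> carrier G \<Longrightarrow> conjugate G g \<one> = \<one>"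
  by (simp add: conjugate_def)

lemma conjugate_conjugate_inv [simp]:
  "g \<in> carrier G \<Longrightarrow> x \<in> carrier G \<Longrightarrow> conjugate G (inv g) (conjugate G g x) = x"
  by (simp add: conjugate_def m_assoc)

lemma conjugate_commute:
  assumes "g \<in> carrier G" "x \<in> carrier G" "y \<in> carrier G" "x \<otimes> y = y \<otimes> x"
  shows "conjugate G g x \<otimes> conjugate G g y = conjugate G g y \<otimes> conjugate G g x"
  using assms by (simp add: conjugate_mult[symmetric])

lemma commute_inv:
  assumes "x \<in> carrier G" "y \<in> carrier G" "x \<otimes> y = y \<otimes> x"
  shows "x \<otimes> inv y = inv y \<otimes> x"
proof -
  have "inv y \<otimes> (x \<otimes> y) \<otimes> inv y = inv y \<otimes> (y \<otimes> x) \<otimes> inv y"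
    using assms(3) by simp
  then show ?thesis
    using assms(1,2) by (simp add: m_assoc)
qed

lemma commute_mult:
  assumes "x \<in> carrier G" "y \<in> carrier G" "z \<in> carrier G"
    and "x \<otimes> y = y \<otimes> x" "x \<otimes> z = z \<otimes> x"
  shows "x \<otimes> (y \<otimes> z) = (y \<otimes> z) \<otimes> x"
  using assms by (metis m_assoc)

lemma cube_roots_iff:
  "x \<in> cube_roots G \<longleftrightarrow> x \<in> carrier G \<and> x \<otimes> x \<otimes> x = \<one>"
  by (auto simp: cube_roots_def numeral_3_eq_3 m_assoc)

lemma cube_root_inv_eq:
  "x \<in> cube_roots G \<Longrightarrow> inv x = x \<otimes> x"
  by (simp add: cube_roots_iff inv_equality)

lemma cube_roots_inv_closed:
  "x \<in> cube_roots G \<Longrightarrow> inv x \<in> cube_roots G"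
  by (simp add: cube_roots_def nat_pow_inv)

lemma translate_cube_root_iff:
  assumes w: "w \<in> cube_roots G" and h: "h \<in> carrier G"
  shows "h \<otimes> w \<in> cube_roots G \<longleftrightarrow>
           h \<otimes> conjugate G (inv w) h \<otimes> conjugate G w h = \<one>"
proof -
  have wc: "w \<in> carrier G" using w by (simp add: cube_roots_iff)
  have "inv w \<otimes> inv w = w"
    using w by (simp add: cube_root_inv_eq m_assoc[symmetric] cube_roots_iff)
  then have "(h \<otimes> w) \<otimes> (h \<otimes> w) \<otimes> (h \<otimes> w)
           = h \<otimes> conjugate G (inv w) h \<otimes> conjugate G w h"
    using wc h by (simp add: conjugate_def m_assoc[symmetric]) (simp add: m_assoc)
  then show ?thesis
    using wc h by (simp add: cube_roots_iff)
qed

lemma cube_roots_conjugate_closed: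
  "g \<in> carrier G \<Longrightarrow> x \<in> cube_roots G \<Longrightarrow> conjugate G g x \<in> cube_roots G"
  by (simp add: cube_roots_iff conjugate_mult[symmetric])

lemma cube_root_mult_simps:
  assumes "w \<in> cube_roots G" "x \<in> carrier G"
  shows "w \<otimes> w = inv w" "w \<otimes> (w \<otimes> x) = inv w \<otimes> x"
    and "inv w \<otimes> inv w = w" "inv w \<otimes> (inv w \<otimes> x) = w \<otimes> x"
proof -
  have w: "w \<in> carrier G" and inv_w: "inv w = w \<otimes> w"
    using assms(1) by (simp_all add: cube_roots_iff cube_root_inv_eq)
  show ww: "w \<otimes> w = inv w" by (simp add: inv_w)
  show "w \<otimes> (w \<otimes> x) = inv w \<otimes> x" using w assms(2) by (simp add: ww m_assoc[symmetric])
  show ii: "inv w \<otimes> inv w = w"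
    using assms(1) w by (simp add: inv_w m_assoc[symmetric] cube_roots_iff)
  show "inv w \<otimes> (inv w \<otimes> x) = w \<otimes> x" using w assms(2) by (simp add: ii m_assoc[symmetric])
qed

(* (pz)^3 = p p1 p2 with p1 = z p z^-1 and p2 = z^-1 p z; the hypotheses give p p1 = p1 p and
   p2 = p1 p^-1 p1, so (pz)^3 = p1^3 = 1. *)
lemma cube_roots_mult_closed_if_commute_conjugates:
  assumes p: "p \<in> cube_roots G" and z: "z \<in> cube_roots G"
    and pz: "p \<otimes> conjugate G z p = conjugate G z p \<otimes> p"
    and zp: "z \<otimes> conjugate G p z = conjugate G p z \<otimes> z"
  shows "p \<otimes> z \<in> cube_roots G"
proof -
  have pc: "p \<in> carrier G" and zc: "z \<in> carrier G"
    using p z by (simp_all add: cube_roots_iff)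
  define p1 where "p1 = conjugate G (inv z) p"
  have p1: "p1 \<in> cube_roots G"
    using p zc by (simp add: p1_def cube_roots_conjugate_closed)
  then have p1c: "p1 \<in> carrier G" by (simp add: cube_roots_iff)
  have "p \<otimes> p1 = p1 \<otimes> p"
    using conjugate_commute[OF inv_closed[OF zc] pc _ pz] pc zc by (simp add: p1_def)
  then have p_p1_p1: "p \<otimes> p1 \<otimes> p1 = p1 \<otimes> p1 \<otimes> p"
    using commute_mult[OF pc p1c p1c] pc p1c by (simp add: m_assoc)
  have "inv p1 \<otimes> conjugate G z p = (z \<otimes> conjugate G p z) \<otimes> z"
    using pc zc by (simp add: p1_def conjugate_def inv_mult_group m_assoc cube_root_mult_simps[OF z])
  also have "\<dots> = (conjugate G p z \<otimes> z) \<otimes> z"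
    by (simp only: zp)
  also have "\<dots> = inv p \<otimes> p1"
    using pc zc by (simp add: p1_def conjugate_def m_assoc cube_root_mult_simps[OF z])
  finally have "conjugate G z p = p1 \<otimes> inv p \<otimes> p1"
    using pc zc p1c inv_solve_left'[of "inv p \<otimes> p1" p1 "conjugate G z p"] by (simp add: m_assoc)
  then have "p \<otimes> p1 \<otimes> conjugate G z p = p1 \<otimes> p1 \<otimes> p1"
    using pc p1c by (simp add: m_assoc[symmetric] p_p1_p1) (simp add: m_assoc)
  then show ?thesis
    unfolding translate_cube_root_iff[OF z pc] p1_def[symmetric]
    using p1 by (simp add: cube_roots_iff)
qed

lemma comm_eq_one_iff:
  "x \<in> carrier G \<Longrightarrow> y \<in> carrier G \<Longrightarrow> comm G x y = \<one> \<longleftrightarrow> x \<otimes> y = y \<otimes> x"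
  by (simp add: comm_def m_assoc inv_solve_left')

(* With sigma = conjugation by v1^-1 and tau = conjugation by v, the last three relations read
   u1 sigma(u2) = tau(u)^-1,  u sigma(u1) = tau(u2)^-1  and  u u1 sigma(u^-1) = tau(u1).
   Inserting them into tau(u) tau(u1) tau(u2) = 1 shows that u commutes with s = sigma(u2),
   and then also with tau(u) = s^-1 u1^-1. *)
lemma commute_conjugate_if_twisted_relations:
  assumes c: "u \<in> carrier G" "u1 \<in> carrier G" "u2 \<in> carrier G"
      "v \<in> carrier G" "v1 \<in> carrier G" "v2 \<in> carrier G"
    and Hu: "u \<otimes> u1 \<otimes> u2 = \<one>" and Hiu: "inv u \<otimes> inv u1 \<otimes> inv u2 = \<one>"
    and Hv: "v \<otimes> v1 \<otimes> v2 = \<one>"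
    and Huv: "u \<otimes> v \<otimes> (u1 \<otimes> v1) \<otimes> (u2 \<otimes> v2) = \<one>"
    and Hvu: "v \<otimes> u \<otimes> (v1 \<otimes> u1) \<otimes> (v2 \<otimes> u2) = \<one>"
    and Huvu: "u \<otimes> v \<otimes> u \<otimes> (u1 \<otimes> v1 \<otimes> u1) \<otimes> (u2 \<otimes> v2 \<otimes> u2) = \<one>"
  shows "u \<otimes> conjugate G v u = conjugate G v u \<otimes> u"
proof -
  have comm_u: "u \<otimes> u1 = u1 \<otimes> u"
    using c(1-3) Hu Hiu by (rule commute_if_mult_eq_one_and_inv_mult_eq_one)
  have u2a: "u2 = inv u1 \<otimes> inv u"
    using Hu c mult_eq_one_imp_eq_inv[of "u \<otimes> u1" u2] by (simp add: inv_mult_group)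
  then have u2b: "u2 = inv u \<otimes> inv u1"
    using c by (simp add: inv_mult_group[symmetric] comm_u)
  have v2: "v2 = inv v1 \<otimes> inv v"
    using Hv c mult_eq_one_imp_eq_inv[of "v \<otimes> v1" v2] by (simp add: inv_mult_group)
  define s s' s'' where "s = v1 \<otimes> u2 \<otimes> inv v1" and "s' = v1 \<otimes> u1 \<otimes> inv v1"
    and "s'' = v1 \<otimes> inv u \<otimes> inv v1"
  have sc: "s \<in> carrier G" "s' \<in> carrier G" "s'' \<in> carrier G"
    using c by (simp_all add: s_def s'_def s''_def)
  have "(u \<otimes> v) \<otimes> (u1 \<otimes> s) \<otimes> inv v = \<one>"
    using Huv c by (simp add: s_def v2 m_assoc)
  then have "u1 \<otimes> s = inv (u \<otimes> v) \<otimes> inv (inv v)"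
    using c sc by (intro mult_eq_one_solve_middle) simp_all
  then have conj_u: "conjugate G v u = inv (u1 \<otimes> s)"
    using c by (simp add: conjugate_def inv_mult_group m_assoc)
  have "v \<otimes> (u \<otimes> s') \<otimes> (inv v \<otimes> u2) = \<one>"
    using Hvu c by (simp add: s'_def v2 m_assoc)
  then have "u \<otimes> s' = inv v \<otimes> inv (inv v \<otimes> u2)"
    using c sc by (intro mult_eq_one_solve_middle) simp_all
  then have conj_u2: "conjugate G v u2 = inv (u \<otimes> s')"
    using c by (simp add: conjugate_def inv_mult_group m_assoc)
  have "(u \<otimes> v) \<otimes> (u \<otimes> u1 \<otimes> s'') \<otimes> (inv v \<otimes> u2) = \<one>"
    using Huvu c by (simp add: s''_def u2a v2 m_assoc)
  then have "u \<otimes> u1 \<otimes> s'' = inv (u \<otimes> v) \<otimes> inv (inv v \<otimes> u2)"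
    using c sc by (intro mult_eq_one_solve_middle) simp_all
  then have "conjugate G v u1 = u \<otimes> u1 \<otimes> s''"
    using c by (simp add: conjugate_def inv_mult_group m_assoc u2a)
  then have conj_u1: "conjugate G v u1 = u1 \<otimes> u \<otimes> s''"
    by (simp only: comm_u)
  have "comm G s (inv u) = conjugate G v u \<otimes> conjugate G v u1 \<otimes> conjugate G v u2"
    unfolding conj_u conj_u1 conj_u2
    using c by (simp add: comm_def s_def s'_def s''_def u2b inv_mult_group m_assoc)
  also have "\<dots> = \<one>"
    using Hu c by (simp add: conjugate_mult[symmetric])
  finally have "s \<otimes> inv u = inv u \<otimes> s"
    using c sc by (simp add: comm_eq_one_iff)
  then have "u \<otimes> s = s \<otimes> u"
    using commute_inv[of s "inv u"] c sc by simp
  then have "u \<otimes> (inv s \<otimes> inv u1) = (inv s \<otimes> inv u1) \<otimes> u"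
    using commute_inv[OF c(1) sc(1)] commute_inv[OF c(1,2) comm_u] c sc
    by (intro commute_mult) simp_all
  then show ?thesis
    unfolding conj_u using c sc by (simp add: inv_mult_group)
qed

lemma commute_conjugate_if_translates_cube_roots:
  assumes u: "u \<in> carrier G" and v: "v \<in> carrier G" and w: "w \<in> cube_roots G"
    and "u \<otimes> w \<in> cube_roots G" "inv u \<otimes> w \<in> cube_roots G" "v \<otimes> w \<in> cube_roots G"
      "u \<otimes> v \<otimes> w \<in> cube_roots G" "v \<otimes> u \<otimes> w \<in> cube_roots G"
      "u \<otimes> v \<otimes> u \<otimes> w \<in> cube_roots G"
  shows "u \<otimes> conjugate G v u = conjugate G v u \<otimes> u"
proof -
  have wc: "w \<in> carrier G" using w by (simp add: cube_roots_iff)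
  note cube = translate_cube_root_iff[OF w]
  show ?thesis
  proof (rule commute_conjugate_if_twisted_relations
      [of u "conjugate G (inv w) u" "conjugate G w u" v "conjugate G (inv w) v" "conjugate G w v"])
    show "u \<otimes> conjugate G (inv w) u \<otimes> conjugate G w u = \<one>"
      using assms(4) cube[OF u] by simp
    show "inv u \<otimes> inv (conjugate G (inv w) u) \<otimes> inv (conjugate G w u) = \<one>"
      using assms(5) cube[OF inv_closed[OF u]] u wc by (simp add: conjugate_inv)
    show "v \<otimes> conjugate G (inv w) v \<otimes> conjugate G w v = \<one>"
      using assms(6) cube[OF v] by simp
    show "u \<otimes> v \<otimes> (conjugate G (inv w) u \<otimes> conjugate G (inv w) v)
            \<otimes> (conjugate G w u \<otimes> conjugate G w v) = \<one>"
      using assms(7) cube[OF m_closed[OF u v]] u v wc by (simp add: conjugate_mult)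
    show "v \<otimes> u \<otimes> (conjugate G (inv w) v \<otimes> conjugate G (inv w) u)
            \<otimes> (conjugate G w v \<otimes> conjugate G w u) = \<one>"
      using assms(8) cube[OF m_closed[OF v u]] u v wc by (simp add: conjugate_mult)
    show "u \<otimes> v \<otimes> u \<otimes> (conjugate G (inv w) u \<otimes> conjugate G (inv w) v \<otimes> conjugate G (inv w) u)
            \<otimes> (conjugate G w u \<otimes> conjugate G w v \<otimes> conjugate G w u) = \<one>"
      using assms(9) cube[OF m_closed[OF m_closed[OF u v] u]] u v wc by (simp add: conjugate_mult)
  qed (use u v wc in simp_all)
qed

lemma comm_comm_eq_one_iff:
  assumes x: "x \<in> carrier G" and y: "y \<in> carrier G"
  shows "comm G (comm G x y) y = \<one> \<longleftrightarrow> y \<otimes> conjugate G x y = conjugate G x y \<otimes> y"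
proof -
  have cxy: "comm G x y = inv (conjugate G x y) \<otimes> y"
    using x y by (simp add: comm_def conjugate_def inv_mult_group m_assoc)
  have "comm G (comm G x y) y = \<one> \<longleftrightarrow>
          (inv (conjugate G x y) \<otimes> y) \<otimes> y = (y \<otimes> inv (conjugate G x y)) \<otimes> y"
    using x y by (simp add: comm_eq_one_iff cxy m_assoc)
  also have "\<dots> \<longleftrightarrow> inv (conjugate G x y) \<otimes> y = y \<otimes> inv (conjugate G x y)"
    using x y by (intro right_cancel) simp_all
  also have "\<dots> \<longleftrightarrow> y \<otimes> conjugate G x y = conjugate G x y \<otimes> y"
  proof
    assume "inv (conjugate G x y) \<otimes> y = y \<otimes> inv (conjugate G x y)"
    then show "y \<otimes> conjugate G x y = conjugate G x y \<otimes> y"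
      using commute_inv[of y "inv (conjugate G x y)"] x y by simp
  next
    assume "y \<otimes> conjugate G x y = conjugate G x y \<otimes> y"
    then show "inv (conjugate G x y) \<otimes> y = y \<otimes> inv (conjugate G x y)"
      using commute_inv[of y "conjugate G x y"] x y by simp
  qed
  finally show ?thesis .
qed

lemma two_Engel_iff_commute_conjugate:
  "two_Engel G \<longleftrightarrow>
     (\<forall>x\<in>carrier G. \<forall>y\<in>carrier G. y \<otimes> conjugate G x y = conjugate G x y \<otimes> y)"
  by (simp add: two_Engel_def comm_comm_eq_one_iff)

lemma two_Engel_cube_roots_mult_closed:
  assumes "two_Engel G" "p \<in> cube_roots G" "z \<in> cube_roots G"
  shows "p \<otimes> z \<in> cube_roots G"
proof -
  have "p \<in> carrier G" "z \<in> carrier G"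
    using assms(2,3) by (simp_all add: cube_roots_iff)
  then show ?thesis
    using assms(1) unfolding two_Engel_iff_commute_conjugate
    by (intro cube_roots_mult_closed_if_commute_conjugates[OF assms(2,3)]) simp_all
qed

lemma k_large_common_translate:
  assumes "k_large G (length hs) X" "set hs \<subseteq> carrier G" "X \<subseteq> carrier G" "hs \<noteq> []"
  obtains w where "w \<in> carrier G" "\<forall>h\<in>set hs. h \<otimes> w \<in> X"
proof -
  have "\<forall>i<length hs. inv (hs ! i) \<in> carrier G"
  proof (intro allI impI)
    fix i
    assume "i < length hs"
    then have "hs ! i \<in> carrier G"
      using assms(2) by (intro rev_subsetD[OF nth_mem])
    then show "inv (hs ! i) \<in> carrier G"
      by (rule inv_closed)
  qed
  then have "(\<Inter>i<length hs. inv (hs ! i) <# X) \<noteq> {}"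
    using assms(1) spec[of _ "\<lambda>i. inv (hs ! i)"] unfolding k_large_def by blast
  then obtain w where w: "\<And>i. i < length hs \<Longrightarrow> w \<in> inv (hs ! i) <# X"
    by blast
  have "h \<otimes> w \<in> X" if h: "h \<in> set hs" for h
  proof -
    obtain i where "i < length hs" "h = hs ! i"
      using h by (auto simp: in_set_conv_nth)
    then obtain x where "x \<in> X" "w = inv h \<otimes> x"
      using w unfolding l_coset_def by blast
    moreover have "h \<in> carrier G" "x \<in> carrier G"
      using h assms(2,3) \<open>x \<in> X\<close> by auto
    ultimately show ?thesis
      by simp
  qed
  moreover have "w \<in> carrier G"
  proof -
    obtain x where "x \<in> X" "w = inv (hs ! 0) \<otimes> x"
      using w[of 0] assms(4) unfolding l_coset_def by auto
    moreover have "hs ! 0 \<in> carrier G"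
      using assms(2,4) by (intro rev_subsetD[OF nth_mem]) simp_all
    ultimately show ?thesis
      using assms(3) by auto
  qed
  ultimately show ?thesis
    using that by blast
qed

lemma seven_large_cube_roots_imp_two_Engel:
  assumes "k_large G 7 (cube_roots G)"
  shows "two_Engel G"
  unfolding two_Engel_iff_commute_conjugate
proof (intro ballI)
  fix v u
  assume u: "u \<in> carrier G" and v: "v \<in> carrier G"
  let ?hs = "[\<one>, u, inv u, v, u \<otimes> v, v \<otimes> u, u \<otimes> v \<otimes> u]"
  have "k_large G (length ?hs) (cube_roots G)"
    using assms by (simp add: eval_nat_numeral)
  then obtain w where "w \<in> carrier G" "\<forall>h\<in>set ?hs. h \<otimes> w \<in> cube_roots G"
    using u v by (elim k_large_common_translate) (auto simp: cube_roots_def)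
  then show "u \<otimes> conjugate G v u = conjugate G v u \<otimes> u"
    using u v commute_conjugate_if_translates_cube_roots[of u v w] by simp
qed

lemma two_large_cube_roots_two_Engel_imp_exponent3:
  assumes "k_large G 2 (cube_roots G)" "two_Engel G"
  shows "exponent3 G"
  unfolding exponent3_def
proof
  fix a
  assume a: "a \<in> carrier G"
  have "k_large G (length [\<one>, inv a]) (cube_roots G)"
    using assms(1) by (simp add: numeral_2_eq_2)
  then obtain w where w: "w \<in> carrier G" "\<forall>h\<in>set [\<one>, inv a]. h \<otimes> w \<in> cube_roots G"
    using a by (elim k_large_common_translate) (auto simp: cube_roots_def)
  then have "w \<in> cube_roots G" "inv a \<otimes> w \<in> cube_roots G"
    by simp_all
  then have "w \<otimes> inv (inv a \<otimes> w) \<in> cube_roots G"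
    using two_Engel_cube_roots_mult_closed[OF assms(2)] cube_roots_inv_closed by blast
  moreover have "w \<otimes> inv (inv a \<otimes> w) = a"
    using a w(1) by (simp add: inv_mult_group)
  ultimately show "a [^] (3::nat) = \<one>"
    by (simp add: cube_roots_def)
qed

end

lemma k_large_mono:
  assumes "k_large G k X" "j \<le> k"
  shows "k_large G j X"
  unfolding k_large_def
proof (intro allI impI)
  fix g :: "nat \<Rightarrow> 'a"
  assume g: "\<forall>i<j. g i \<in> carrier G"
  show "(\<Inter>i<j. l_coset G (g i) X) \<noteq> {}"
  proof (cases "j = 0")
    case False
    define g' where "g' i = g (min i (j - 1))" for i
    have "\<forall>i<k. g' i \<in> carrier G"
      using g False by (simp add: g'_def)
    then have "(\<Inter>i<k. l_coset G (g' i) X) \<noteq> {}"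
      using assms(1) by (simp add: k_large_def)
    moreover have "(\<Inter>i<k. l_coset G (g' i) X) \<subseteq> (\<Inter>i<j. l_coset G (g i) X)"
    proof (intro subsetI INT_I)
      fix x i
      assume "x \<in> (\<Inter>i<k. l_coset G (g' i) X)" and i: "i \<in> {..<j}"
      then have "x \<in> l_coset G (g' i) X"
        using assms(2) by auto
      then show "x \<in> l_coset G (g i) X"
        using i by (simp add: g'_def)
    qed
    ultimately show ?thesis
      by blast
  qed simp
qed

locale left_inv_prob_space =
  fixes G :: "('a, 'b) monoid_scheme" and M :: "'a set set" and \<mu> :: "'a set \<Rightarrow> real"
  assumes left_inv_prob_measure: "left_inv_prob_measure G M \<mu>"
begin

lemma sets_subset: "A \<in> M \<Longrightarrow> A \<subseteq> carrier G"
  and sets_empty: "{} \<in> M"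
  and sets_compl: "A \<in> M \<Longrightarrow> carrier G - A \<in> M"
  and sets_Un: "A \<in> M \<Longrightarrow> B \<in> M \<Longrightarrow> A \<union> B \<in> M"
  and sets_translate: "g \<in> carrier G \<Longrightarrow> A \<in> M \<Longrightarrow> l_coset G g A \<in> M"
  using left_inv_prob_measure by (auto simp: left_inv_prob_measure_def set_algebra_def)

lemma measure_nonneg: "A \<in> M \<Longrightarrow> 0 \<le> \<mu> A"
  and measure_carrier: "\<mu> (carrier G) = 1"
  and measure_additive: "A \<in> M \<Longrightarrow> B \<in> M \<Longrightarrow> A \<inter> B = {} \<Longrightarrow> \<mu> (A \<union> B) = \<mu> A + \<mu> B"
  and measure_translate: "g \<in> carrier G \<Longrightarrow> A \<in> M \<Longrightarrow> \<mu> (l_coset G g A) = \<mu> A"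
  using left_inv_prob_measure by (auto simp: left_inv_prob_measure_def)

lemma sets_Diff: "A \<in> M \<Longrightarrow> B \<in> M \<Longrightarrow> A - B \<in> M"
proof -
  assume "A \<in> M" "B \<in> M"
  moreover have "A - B = carrier G - ((carrier G - A) \<union> B)"
    using sets_subset[OF \<open>A \<in> M\<close>] by blast
  ultimately show ?thesis
    by (simp add: sets_compl sets_Un)
qed

lemma measure_compl: "A \<in> M \<Longrightarrow> \<mu> (carrier G - A) = 1 - \<mu> A"
proof -
  assume A: "A \<in> M"
  then have "A \<union> (carrier G - A) = carrier G"
    using sets_subset by blast
  then show ?thesis
    using measure_additive[OF A sets_compl[OF A]] measure_carrier by auto
qed

lemma measure_Un_le: "A \<in> M \<Longrightarrow> B \<in> M \<Longrightarrow> \<mu> (A \<union> B) \<le> \<mu> A + \<mu> B"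
proof -
  assume A: "A \<in> M" and B: "B \<in> M"
  have "\<mu> (A \<union> B) = \<mu> A + \<mu> (B - A)"
    using measure_additive[OF A sets_Diff[OF B A]] by simp
  moreover have "(B - A) \<union> (B - (B - A)) = B"
    by blast
  then have "\<mu> B = \<mu> (B - A) + \<mu> (B - (B - A))"
    using measure_additive[OF sets_Diff[OF B A] sets_Diff[OF B sets_Diff[OF B A]]] by auto
  ultimately show ?thesis
    using measure_nonneg[OF sets_Diff[OF B sets_Diff[OF B A]]] by simp
qed

lemma measure_UN_le:
  fixes k :: nat
  assumes "\<And>i. i < k \<Longrightarrow> A i \<in> M"
  shows "(\<Union>i<k. A i) \<in> M \<and> \<mu> (\<Union>i<k. A i) \<le> (\<Sum>i<k. \<mu> (A i))"
  using assms
proof (induction k)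
  case 0
  then show ?case
    using sets_empty measure_additive[OF sets_empty sets_empty] by simp
next
  case (Suc k)
  then have IH: "(\<Union>i<k. A i) \<in> M" "\<mu> (\<Union>i<k. A i) \<le> (\<Sum>i<k. \<mu> (A i))"
    and Ak: "A k \<in> M"
    by auto
  have "(\<Union>i<Suc k. A i) = A k \<union> (\<Union>i<k. A i)"
    by (auto simp: lessThan_Suc)
  then show ?case
    using sets_Un[OF Ak IH(1)] measure_Un_le[OF Ak IH(1)] IH(2) by simp
qed

lemma inner_measure_le:
  assumes "\<And>Y. Y \<in> M \<Longrightarrow> Y \<subseteq> X \<Longrightarrow> \<mu> Y \<le> c"
  shows "inner_measure M \<mu> X \<le> c"
  unfolding inner_measure_def
  using assms sets_empty by (intro cSup_least) auto

lemma inner_measure_le_if_not_k_large: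
  assumes "\<not> k_large G k X"
  shows "inner_measure M \<mu> X \<le> 1 - 1 / k"
proof (rule inner_measure_le)
  obtain g where g: "\<And>i. i < k \<Longrightarrow> g i \<in> carrier G"
    and disjoint: "(\<Inter>i<k. l_coset G (g i) X) = {}"
    using assms unfolding k_large_def by blast
  fix Y
  assume Y: "Y \<in> M" "Y \<subseteq> X"
  define A where "A i = carrier G - l_coset G (g i) Y" for i
  have A: "A i \<in> M" "\<mu> (A i) = 1 - \<mu> Y" if "i < k" for i
    using g[OF that] Y(1) by (simp_all add: A_def sets_compl sets_translate measure_compl measure_translate)
  have Y_X: "l_coset G (g i) Y \<subseteq> l_coset G (g i) X" for i
    using Y(2) by (auto simp: l_coset_def)
  have "carrier G \<subseteq> (\<Union>i<k. A i)"
  proof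
    fix x
    assume "x \<in> carrier G"
    show "x \<in> (\<Union>i<k. A i)"
    proof (rule ccontr)
      assume "x \<notin> (\<Union>i<k. A i)"
      then have "x \<in> (\<Inter>i<k. l_coset G (g i) X)"
        using \<open>x \<in> carrier G\<close> Y_X by (auto simp: A_def)
      then show False
        using disjoint by blast
    qed
  qed
  then have "(\<Union>i<k. A i) = carrier G"
    by (auto simp: A_def)
  then have "1 \<le> real k * (1 - \<mu> Y)"
    using measure_UN_le[of k A] A measure_carrier by simp
  then show "\<mu> Y \<le> 1 - 1 / k"
    by (cases "k = 0") (simp_all add: field_simps)
qed

end

theorem corollary4p5:
  fixes G :: "('a, 'b) monoid_scheme"
  assumes "group G"
  shows "(k_large G 7 (cube_roots G) \<longrightarrow> exponent3 G) \<and>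
         (\<forall>M \<mu>. left_inv_prob_measure G M \<mu> \<longrightarrow> \<not> exponent3 G \<longrightarrow>
             inner_measure M \<mu> (cube_roots G) \<le> 6/7 \<and>
             (two_Engel G \<longrightarrow> inner_measure M \<mu> (cube_roots G) \<le> 1/2))"
proof -
  interpret group G by fact
  have seven_large: "exponent3 G" if "k_large G 7 (cube_roots G)"
    using that k_large_mono[OF that, of 2] seven_large_cube_roots_imp_two_Engel
      two_large_cube_roots_two_Engel_imp_exponent3 by simp
  have "inner_measure M \<mu> (cube_roots G) \<le> 6/7 \<and>
        (two_Engel G \<longrightarrow> inner_measure M \<mu> (cube_roots G) \<le> 1/2)"
    if "left_inv_prob_measure G M \<mu>" "\<not> exponent3 G" for M \<mu>
  proof -
    interpret left_inv_prob_space G M \<mu> by unfold_locales fact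
    have "\<not> k_large G 7 (cube_roots G)"
      using seven_large that(2) by blast
    then have "inner_measure M \<mu> (cube_roots G) \<le> 1 - 1 / 7"
      using inner_measure_le_if_not_k_large by fastforce
    moreover have "inner_measure M \<mu> (cube_roots G) \<le> 1 - 1 / 2" if "two_Engel G"
    proof -
      have "\<not> k_large G 2 (cube_roots G)"
        using two_large_cube_roots_two_Engel_imp_exponent3 that \<open>\<not> exponent3 G\<close> by blast
      then show ?thesis
        using inner_measure_le_if_not_k_large by fastforce
    qed
    ultimately show ?thesis
      by simp
  qed
  then show ?thesis
    using seven_large by blast
qed

end
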